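(* Let $T$ be an integral domain of the form $T=K+M$, where $K$ is a subfield of $T$ and $M$ is a nonzero maximal ideal of $T$. Let $D$ be a subring of $K$ and $R=D+M$. Then: (1) If $D$ is a field, then $R$ is a completely atomic domain if and only if $T$ is a completely atomic domain. (2) If $D$ is not a field, $D$ is atomic, and $T$ is completely atomic, then $R$ is a completely atomic domain.
   Context: An atom (irreducible element) of an integral domain is a nonzero nonunit $a$ such that $a=bc$ implies $b$ or $c$ is a unit. A nonzero nonunit is atomic if it is a finite product of atoms; a domain is atomic if every nonzero nonunit is atomic. A domain is completely atomic if every nonunit divisor of an atomic element is atomic. *)

theory Defs
  imports Main
begin

text \<open>The ambient integral domain T is modelled as a type of class idom;
  subrings (K, D, R) are subsets of it, and all ring-theoretic notions
  (units, atoms, divisibility, atomicity) are taken relative to a subring S.\<close>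

definition subring_of :: "'a::idom set \<Rightarrow> bool" where
  "subring_of S \<longleftrightarrow> 0 \<in> S \<and> 1 \<in> S \<and>
     (\<forall>x\<in>S. \<forall>y\<in>S. x + y \<in> S \<and> x - y \<in> S \<and> x * y \<in> S)"

definition subfield_of :: "'a::idom set \<Rightarrow> bool" where
  "subfield_of K \<longleftrightarrow> subring_of K \<and> (\<forall>x\<in>K. x \<noteq> 0 \<longrightarrow> (\<exists>y\<in>K. x * y = 1))"

definition ideal_of :: "'a::idom set \<Rightarrow> bool" where
  "ideal_of I \<longleftrightarrow> 0 \<in> I \<and> (\<forall>x\<in>I. \<forall>y\<in>I. x + y \<in> I) \<and> (\<forall>t. \<forall>x\<in>I. t * x \<in> I)"

definition maximal_ideal :: "'a::idom set \<Rightarrow> bool" where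
  "maximal_ideal M \<longleftrightarrow> ideal_of M \<and> M \<noteq> UNIV \<and>
     (\<forall>I. ideal_of I \<and> M \<subseteq> I \<longrightarrow> I = M \<or> I = UNIV)"

definition unit_in :: "'a::idom set \<Rightarrow> 'a \<Rightarrow> bool" where
  "unit_in S a \<longleftrightarrow> a \<in> S \<and> (\<exists>b\<in>S. a * b = 1)"

definition dvd_in :: "'a::idom set \<Rightarrow> 'a \<Rightarrow> 'a \<Rightarrow> bool" where
  "dvd_in S b a \<longleftrightarrow> b \<in> S \<and> (\<exists>c\<in>S. a = b * c)"

definition atom_in :: "'a::idom set \<Rightarrow> 'a \<Rightarrow> bool" where
  "atom_in S a \<longleftrightarrow> a \<in> S \<and> a \<noteq> 0 \<and> \<not> unit_in S a \<and>
     (\<forall>b\<in>S. \<forall>c\<in>S. a = b * c \<longrightarrow> unit_in S b \<or> unit_in S c)"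

definition atomic_elem_in :: "'a::idom set \<Rightarrow> 'a \<Rightarrow> bool" where
  "atomic_elem_in S a \<longleftrightarrow> a \<in> S \<and> a \<noteq> 0 \<and> \<not> unit_in S a \<and>
     (\<exists>xs. xs \<noteq> [] \<and> (\<forall>x\<in>set xs. atom_in S x) \<and> a = prod_list xs)"

definition atomic_dom :: "'a::idom set \<Rightarrow> bool" where
  "atomic_dom S \<longleftrightarrow> (\<forall>a\<in>S. a \<noteq> 0 \<and> \<not> unit_in S a \<longrightarrow> atomic_elem_in S a)"

definition completely_atomic :: "'a::idom set \<Rightarrow> bool" where
  "completely_atomic S \<longleftrightarrow>
     (\<forall>a b. atomic_elem_in S a \<and> dvd_in S b a \<and> \<not> unit_in S b \<longrightarrow> atomic_elem_in S b)"

end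

(*
  Writing t = k + m with k in K and m in M determines k, so t |-> k is a ring homomorphism
  T -> K (the residue map) with kernel M, and R = D + M is the preimage of D.  Complete
  atomicity of a ring S says exactly that every divisor in S of a unit times a product of
  atoms of S is again of that form.

  A factorization x = b c in T of an element x of R can be rescaled by units of T into a
  factorization inside R (normalize a factor outside M to residue 1), so every atom of R is
  a unit or an atom of T.  If D is a field, the units and atoms of R are exactly the units
  and atoms of T that lie in R, and every element of T is associate to one in R; so R and T
  satisfy the divisor condition together.

  If D is not a field, no atom of R lies in M (otherwise m = d (d^-1 m) for a nonzero nonunit
  d of D), so a factorizable element of R is factorizable in T and lies outside M.  Its
  divisors b in R are then factorizable in T, and b = residue(b) n with n of residue 1:
  residue(b) is a nonzero element of the atomic domain D, whose atoms remain atoms in R, and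
  n is a product of atoms of T rescaled to residue 1, which are atoms of R.
*)

theory Submission
  imports Defs
begin

section \<open>Factorizations up to units in a subring\<close>

lemma subring_of_UNIV: "subring_of (UNIV :: 'a::idom set)"
  by (simp add: subring_of_def)

lemma subring_closed:
  assumes "subring_of S" "x \<in> S" "y \<in> S"
  shows "x + y \<in> S" "x - y \<in> S" "x * y \<in> S"
  using assms by (auto simp: subring_of_def)

lemma subring_one: "subring_of S \<Longrightarrow> 1 \<in> S"
  by (simp add: subring_of_def)

lemma unit_in_imp_unit_in_UNIV: "unit_in S a \<Longrightarrow> unit_in UNIV a"
  by (auto simp: unit_in_def)

lemma unit_in_nonzero: "unit_in S u \<Longrightarrow> u \<noteq> 0"
  by (auto simp: unit_in_def)

lemma unit_in_one: "subring_of S \<Longrightarrow> unit_in S 1"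
  by (auto simp: unit_in_def subring_one)

lemma unit_in_mult:
  assumes "subring_of S" "unit_in S a" "unit_in S b"
  shows "unit_in S (a * b)"
proof -
  obtain a' b' where "a \<in> S" "b \<in> S" "a' \<in> S" "b' \<in> S" "a * a' = 1" "b * b' = 1"
    using assms(2,3) by (auto simp: unit_in_def)
  then have "a * b \<in> S" "a' * b' \<in> S" "(a * b) * (a' * b') = 1"
    using assms(1) by (auto simp: subring_closed ac_simps)
  then show ?thesis
    by (auto simp: unit_in_def)
qed

lemma unit_in_mult_factor:
  assumes "subring_of S" "a \<in> S" "b \<in> S" "unit_in S (a * b)"
  shows "unit_in S a"
proof -
  obtain c where "c \<in> S" "a * (b * c) = 1"
    using assms(4) by (auto simp: unit_in_def mult.assoc)
  then show ?thesis
    using assms(1-3) by (auto simp: unit_in_def subring_closed)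
qed

lemma atom_in_unit_mult:
  assumes S: "subring_of S" and a: "atom_in S a" and u: "unit_in S u"
  shows "atom_in S (u * a)"
proof -
  obtain u' where u': "u \<in> S" "u' \<in> S" "u * u' = 1"
    using u by (auto simp: unit_in_def)
  have aS: "a \<in> S" and "a \<noteq> 0" and a_nonunit: "\<not> unit_in S a"
    using a by (auto simp: atom_in_def)
  have u'_unit: "unit_in S u'"
    using u' by (auto simp: unit_in_def mult.commute)
  have cancel: "u' * (u * x) = x" for x
    using u'(3) by (metis mult.assoc mult.commute mult_1_left)
  have "u * a \<in> S"
    using S u'(1) aS by (simp add: subring_closed)
  moreover have "u * a \<noteq> 0"
    using \<open>a \<noteq> 0\<close> u'(3) by auto
  moreover have "\<not> unit_in S (u * a)"
    using unit_in_mult[OF S u'_unit] a_nonunit cancel by metis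
  moreover have "unit_in S b \<or> unit_in S c" if "b \<in> S" "c \<in> S" "u * a = b * c" for b c
  proof -
    have "a = (u' * b) * c"
      using that(3) cancel by (metis mult.assoc)
    then have "unit_in S (u' * b) \<or> unit_in S c"
      using a that(1,2) u'(2) S by (auto simp: atom_in_def subring_closed)
    moreover have "u * (u' * b) = b"
      using u'(3) by (simp add: mult.assoc[symmetric])
    ultimately show ?thesis
      using unit_in_mult[OF S u] by metis
  qed
  ultimately show ?thesis
    by (auto simp: atom_in_def)
qed

lemma unit_in_UNIV_mult_iff: "unit_in UNIV (a * b) \<longleftrightarrow> unit_in UNIV a \<and> unit_in UNIV b"
  using unit_in_mult[OF subring_of_UNIV] unit_in_mult_factor[OF subring_of_UNIV]
  by (metis UNIV_I mult.commute)

definition factorizable_in :: "'a::idom set \<Rightarrow> 'a \<Rightarrow> bool" where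
  "factorizable_in S p \<longleftrightarrow>
     (\<exists>u xs. unit_in S u \<and> (\<forall>x\<in>set xs. atom_in S x) \<and> p = u * prod_list xs)"

lemma factorizable_in_unit: "unit_in S u \<Longrightarrow> factorizable_in S u"
  unfolding factorizable_in_def by (intro exI[of _ u] exI[of _ "[]"]) simp

lemma factorizable_in_atom: "subring_of S \<Longrightarrow> atom_in S a \<Longrightarrow> factorizable_in S a"
  unfolding factorizable_in_def by (intro exI[of _ 1] exI[of _ "[a]"]) (simp add: unit_in_one)

lemma factorizable_in_mult:
  assumes S: "subring_of S" and "factorizable_in S p" "factorizable_in S q"
  shows "factorizable_in S (p * q)"
proof -
  obtain u xs v ys where "unit_in S u" "\<forall>x\<in>set xs. atom_in S x" "p = u * prod_list xs"
    "unit_in S v" "\<forall>x\<in>set ys. atom_in S x" "q = v * prod_list ys"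
    using assms(2,3) by (auto simp: factorizable_in_def)
  moreover have "p * q = (u * v) * prod_list (xs @ ys)" if "p = u * prod_list xs" "q = v * prod_list ys"
    using that by (simp add: ac_simps)
  ultimately show ?thesis
    unfolding factorizable_in_def using unit_in_mult[OF S]
    by (metis Un_iff set_append)
qed

lemma factorizable_in_induct [consumes 1, case_names unit atom]:
  assumes "factorizable_in S p"
    and unit: "\<And>u. unit_in S u \<Longrightarrow> P u"
    and atom: "\<And>a q. atom_in S a \<Longrightarrow> factorizable_in S q \<Longrightarrow> P q \<Longrightarrow> P (a * q)"
  shows "P p"
proof -
  obtain u xs where u: "unit_in S u" and atoms: "\<forall>x\<in>set xs. atom_in S x"
    and p: "p = u * prod_list xs"
    using assms(1) by (auto simp: factorizable_in_def)
  have "P (u * prod_list xs)"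
    using atoms
  proof (induction xs)
    case Nil
    then show ?case
      using u unit by simp
  next
    case (Cons x xs)
    have "factorizable_in S (u * prod_list xs)"
      unfolding factorizable_in_def using u Cons.prems by auto
    then have "P (x * (u * prod_list xs))"
      using atom Cons by simp
    then show ?case
      by (simp add: mult.left_commute)
  qed
  then show ?thesis
    using p by simp
qed

lemma factorizable_in_mem:
  assumes "subring_of S" "factorizable_in S p"
  shows "p \<in> S"
  using assms(2) by (induction rule: factorizable_in_induct)
    (use assms(1) in \<open>auto simp: unit_in_def atom_in_def subring_closed\<close>)

lemma atomic_elem_in_unit_mult_prod:
  assumes S: "subring_of S" and u: "unit_in S u" and x: "atom_in S x"
    and xs: "\<forall>y\<in>set xs. atom_in S y"
  shows "atomic_elem_in S (u * prod_list (x # xs))"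
proof -
  let ?p = "u * prod_list (x # xs)"
  have "factorizable_in S (u * prod_list xs)" "factorizable_in S ?p"
    using u x xs unfolding factorizable_in_def by (metis set_ConsD)+
  then have rest: "u * prod_list xs \<in> S" and "?p \<in> S"
    using factorizable_in_mem[OF S] by blast+
  moreover have "?p \<noteq> 0"
    using x xs unit_in_nonzero[OF u] by (auto simp: prod_list_zero_iff atom_in_def)
  moreover have "\<not> unit_in S ?p"
    using unit_in_mult_factor[OF S _ rest, of x] x by (auto simp: atom_in_def ac_simps)
  moreover have "\<forall>y\<in>set ((u * x) # xs). atom_in S y"
    using atom_in_unit_mult[OF S x u] xs by simp
  moreover have "?p = prod_list ((u * x) # xs)"
    by (simp add: ac_simps)
  ultimately show ?thesis
    unfolding atomic_elem_in_def by (metis list.distinct(1))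
qed

lemma factorizable_in_iff:
  assumes S: "subring_of S"
  shows "factorizable_in S p \<longleftrightarrow> unit_in S p \<or> atomic_elem_in S p"
proof
  assume "factorizable_in S p"
  then obtain u xs where u: "unit_in S u" and xs: "\<forall>x\<in>set xs. atom_in S x"
    and p: "p = u * prod_list xs"
    by (auto simp: factorizable_in_def)
  then show "unit_in S p \<or> atomic_elem_in S p"
    using atomic_elem_in_unit_mult_prod[OF S u] by (cases xs) auto
next
  assume "unit_in S p \<or> atomic_elem_in S p"
  then show "factorizable_in S p"
  proof
    assume "atomic_elem_in S p"
    then obtain xs where "\<forall>x\<in>set xs. atom_in S x" "p = prod_list xs"
      by (auto simp: atomic_elem_in_def)
    then show ?thesis
      unfolding factorizable_in_def using unit_in_one[OF S]
      by (intro exI[of _ 1] exI[of _ xs]) simp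
  qed (rule factorizable_in_unit)
qed

lemma completely_atomic_iff:
  assumes S: "subring_of S"
  shows "completely_atomic S \<longleftrightarrow>
    (\<forall>p b. factorizable_in S p \<and> dvd_in S b p \<longrightarrow> factorizable_in S b)"
proof (intro iffI allI impI)
  fix p b
  assume ca: "completely_atomic S" and pb: "factorizable_in S p \<and> dvd_in S b p"
  then have p: "factorizable_in S p" and b: "dvd_in S b p"
    by auto
  obtain c where bc: "b \<in> S" "c \<in> S" "p = b * c"
    using b by (auto simp: dvd_in_def)
  consider "unit_in S b" | "unit_in S p" | "atomic_elem_in S p" "\<not> unit_in S b"
    using p factorizable_in_iff[OF S] by blast
  then show "factorizable_in S b"
  proof cases
    case 2
    then have "unit_in S b"
      using unit_in_mult_factor[OF S bc(1,2)] bc(3) by simp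
    then show ?thesis
      by (rule factorizable_in_unit)
  next
    case 3
    then have "atomic_elem_in S b"
      using ca b unfolding completely_atomic_def by blast
    then show ?thesis
      using factorizable_in_iff[OF S] by blast
  qed (rule factorizable_in_unit)
next
  assume "\<forall>p b. factorizable_in S p \<and> dvd_in S b p \<longrightarrow> factorizable_in S b"
  then show "completely_atomic S"
    unfolding completely_atomic_def using factorizable_in_iff[OF S] by blast
qed

section \<open>The residue map of \<open>T = K + M\<close>\<close>

lemma ideal_add: "ideal_of I \<Longrightarrow> x \<in> I \<Longrightarrow> y \<in> I \<Longrightarrow> x + y \<in> I"
  by (simp add: ideal_of_def)

lemma ideal_mult_left: "ideal_of I \<Longrightarrow> x \<in> I \<Longrightarrow> t * x \<in> I"
  by (simp add: ideal_of_def)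

lemma ideal_mult_right: "ideal_of I \<Longrightarrow> x \<in> I \<Longrightarrow> x * t \<in> I"
  using ideal_mult_left[of I x t] by (simp add: mult.commute)

lemma ideal_diff:
  assumes "ideal_of I" "x \<in> I" "y \<in> I"
  shows "x - y \<in> I"
  using ideal_add[OF assms(1,2) ideal_mult_left[OF assms(1,3), of "-1"]] by simp

locale K_plus_M =
  fixes K M :: "'a::idom set"
  assumes subfield_K: "subfield_of K"
    and ideal_M: "ideal_of M" and M_proper: "M \<noteq> UNIV"
    and K_plus_M_decomp: "\<forall>t. \<exists>k\<in>K. \<exists>m\<in>M. t = k + m"
begin

lemma subring_K: "subring_of K"
  using subfield_K by (simp add: subfield_of_def)

lemma K_inverse: "k \<in> K \<Longrightarrow> k \<noteq> 0 \<Longrightarrow> \<exists>k'\<in>K. k * k' = 1"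
  using subfield_K by (simp add: subfield_of_def)

lemma zero_mem_M: "0 \<in> M"
  using ideal_M by (simp add: ideal_of_def)

lemma unit_not_in_M:
  assumes "unit_in UNIV u"
  shows "u \<notin> M"
proof
  assume "u \<in> M"
  obtain u' where "u * u' = 1"
    using assms by (auto simp: unit_in_def)
  then have "t \<in> M" for t
    using ideal_mult_right[OF ideal_M ideal_mult_right[OF ideal_M \<open>u \<in> M\<close>, of u'], of t] by simp
  then show False
    using M_proper by blast
qed

lemma K_nonzero_unit: "k \<in> K \<Longrightarrow> k \<noteq> 0 \<Longrightarrow> unit_in UNIV k"
  using K_inverse by (auto simp: unit_in_def)

lemma K_inter_M: "k \<in> K \<Longrightarrow> k \<in> M \<Longrightarrow> k = 0"
  using K_nonzero_unit unit_not_in_M by blast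

definition residue :: "'a \<Rightarrow> 'a" where
  "residue t = (THE k. k \<in> K \<and> t - k \<in> M)"

lemma residue_ex1: "\<exists>!k. k \<in> K \<and> t - k \<in> M"
proof -
  obtain k m where km: "k \<in> K" "m \<in> M" "t = k + m"
    using K_plus_M_decomp by blast
  show ?thesis
  proof (rule ex1I[of _ k])
    show "k \<in> K \<and> t - k \<in> M"
      using km by simp
    fix k' assume k': "k' \<in> K \<and> t - k' \<in> M"
    have "t - k \<in> M"
      using km by simp
    then have "(t - k') - (t - k) \<in> M"
      using ideal_diff[OF ideal_M] k' by blast
    then have "k - k' \<in> M"
      by simp
    moreover have "k - k' \<in> K"
      using subring_closed(2)[OF subring_K] k' km(1) by simp
    ultimately show "k' = k"
      using K_inter_M by fastforce
  qed
qed

lemma residue_in_K: "residue t \<in> K"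
  and diff_residue_in_M: "t - residue t \<in> M"
  using theI'[OF residue_ex1[of t]] by (simp_all add: residue_def)

lemma residue_eqI: "k \<in> K \<Longrightarrow> t - k \<in> M \<Longrightarrow> residue t = k"
  using residue_ex1 residue_in_K diff_residue_in_M by blast

lemma residue_of_K: "k \<in> K \<Longrightarrow> residue k = k"
  by (rule residue_eqI) (simp_all add: zero_mem_M)

lemma residue_zero: "residue 0 = 0"
  using residue_of_K subring_K by (simp add: subring_of_def)

lemma residue_one: "residue 1 = 1"
  using residue_of_K subring_one[OF subring_K] by simp

lemma residue_add: "residue (a + b) = residue a + residue b"
proof (rule residue_eqI)
  show "residue a + residue b \<in> K"
    using subring_closed(1)[OF subring_K residue_in_K residue_in_K] .
  have "a + b - (residue a + residue b) = (a - residue a) + (b - residue b)"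
    by simp
  then show "a + b - (residue a + residue b) \<in> M"
    using ideal_add[OF ideal_M diff_residue_in_M diff_residue_in_M] by metis
qed

lemma residue_diff: "residue (a - b) = residue a - residue b"
proof (rule residue_eqI)
  show "residue a - residue b \<in> K"
    using subring_closed(2)[OF subring_K residue_in_K residue_in_K] .
  have "a - b - (residue a - residue b) = (a - residue a) - (b - residue b)"
    by simp
  then show "a - b - (residue a - residue b) \<in> M"
    using ideal_diff[OF ideal_M diff_residue_in_M diff_residue_in_M] by metis
qed

lemma residue_mult: "residue (a * b) = residue a * residue b"
proof (rule residue_eqI)
  show "residue a * residue b \<in> K"
    using subring_closed(3)[OF subring_K residue_in_K residue_in_K] .
  have "a * b - residue a * residue b = (a - residue a) * b + residue a * (b - residue b)"
    by (simp add: algebra_simps)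
  moreover have "(a - residue a) * b + residue a * (b - residue b) \<in> M"
    using ideal_add[OF ideal_M] ideal_mult_left[OF ideal_M] ideal_mult_right[OF ideal_M]
      diff_residue_in_M by blast
  ultimately show "a * b - residue a * residue b \<in> M"
    by simp
qed

lemma residue_eq_0_iff: "residue t = 0 \<longleftrightarrow> t \<in> M"
proof
  assume "residue t = 0"
  then show "t \<in> M"
    using diff_residue_in_M[of t] by simp
next
  assume "t \<in> M"
  then show "residue t = 0"
    using residue_eqI[of 0 t] subring_K by (simp add: subring_of_def)
qed

lemma mult_not_in_M_iff: "a * b \<notin> M \<longleftrightarrow> a \<notin> M \<and> b \<notin> M"
  by (simp add: residue_eq_0_iff[symmetric] residue_mult)

lemma residue_inverseE:
  assumes "t \<notin> M"
  obtains k where "k \<in> K" "unit_in UNIV k" "residue t * k = 1" "residue (t * k) = 1"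
proof -
  obtain k where "k \<in> K" "residue t * k = 1"
    using K_inverse residue_in_K residue_eq_0_iff assms by blast
  then show thesis
    using that K_nonzero_unit by (fastforce simp: residue_mult residue_of_K)
qed

end

section \<open>The ring \<open>R = D + M\<close>\<close>

locale D_plus_M = K_plus_M +
  fixes D :: "'a set"
  assumes subring_D: "subring_of D" and D_subset_K: "D \<subseteq> K"
begin

definition R :: "'a set" where
  "R = {d + m | d m. d \<in> D \<and> m \<in> M}"

lemma mem_R_iff: "t \<in> R \<longleftrightarrow> residue t \<in> D"
proof
  assume "t \<in> R"
  then obtain d m where "d \<in> D" "m \<in> M" "t = d + m"
    by (auto simp: R_def)
  then have "residue t = d"
    using D_subset_K residue_eq_0_iff[of m] by (auto simp: residue_add residue_of_K)
  then show "residue t \<in> D"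
    using \<open>d \<in> D\<close> by simp
next
  assume "residue t \<in> D"
  moreover have "t = residue t + (t - residue t)"
    by simp
  ultimately show "t \<in> R"
    unfolding R_def using diff_residue_in_M by blast
qed

lemma subring_R: "subring_of R"
  using subring_D
  by (simp add: subring_of_def mem_R_iff residue_add residue_diff residue_mult residue_one
      residue_zero)

lemma D_subset_R: "D \<subseteq> R"
  using D_subset_K by (auto simp: mem_R_iff residue_of_K)

lemma M_subset_R: "M \<subseteq> R"
  using subring_D by (auto simp: mem_R_iff residue_eq_0_iff[THEN iffD2] subring_of_def)

lemma unit_in_R_iff: "unit_in R x \<longleftrightarrow> x \<in> R \<and> unit_in UNIV x \<and> unit_in D (residue x)"
proof
  assume "unit_in R x"
  then obtain y where "x \<in> R" "y \<in> R" "x * y = 1"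
    by (auto simp: unit_in_def)
  moreover have "residue x * residue y = 1"
    using \<open>x * y = 1\<close> by (metis residue_mult residue_one)
  ultimately show "x \<in> R \<and> unit_in UNIV x \<and> unit_in D (residue x)"
    by (auto simp: unit_in_def mem_R_iff)
next
  assume x: "x \<in> R \<and> unit_in UNIV x \<and> unit_in D (residue x)"
  then obtain y e where y: "x * y = 1" and e: "e \<in> D" "residue x * e = 1"
    by (auto simp: unit_in_def)
  have "residue x * residue y = 1"
    using y by (metis residue_mult residue_one)
  then have "residue y = e"
    using e(2) by (metis mult.left_commute mult_1_right)
  then show "unit_in R x"
    using x y e(1) by (auto simp: unit_in_def mem_R_iff)
qed

lemma unit_in_R_iff_unit_in_D:
  assumes "d \<in> D"
  shows "unit_in R d \<longleftrightarrow> unit_in D d"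
proof -
  have "residue d = d"
    using assms D_subset_K by (auto simp: residue_of_K)
  then show ?thesis
    using assms D_subset_R unfolding unit_in_R_iff by (auto simp: unit_in_def)
qed

lemma unit_in_R_if_residue_one: "unit_in UNIV u \<Longrightarrow> residue u = 1 \<Longrightarrow> unit_in R u"
  using subring_D unfolding unit_in_R_iff by (simp add: mem_R_iff unit_in_one subring_one)

lemma factor_in_R_up_to_units:
  assumes x: "x \<in> R" and x_eq: "x = b * c"
  shows "\<exists>u v. unit_in UNIV u \<and> unit_in UNIV v \<and> b * u \<in> R \<and> c * v \<in> R
    \<and> x = (b * u) * (c * v)"
proof -
  have normalize_left: "\<exists>u v. unit_in UNIV u \<and> unit_in UNIV v \<and> b * u \<in> R \<and> c * v \<in> R
      \<and> b * c = (b * u) * (c * v)" if "b * c \<in> R" "b \<notin> M" for b c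
  proof -
    \<comment> \<open>Scale \<open>b\<close> to residue 1 and move its residue onto \<open>c\<close>.\<close>
    obtain k where k: "unit_in UNIV k" "residue b * k = 1" "residue (b * k) = 1"
      using residue_inverseE[OF \<open>b \<notin> M\<close>] by blast
    have "residue (c * residue b) = residue (b * c)"
      by (simp add: residue_mult residue_of_K residue_in_K mult.commute)
    moreover have "b * c = (b * k) * (c * residue b)"
      using k(2) by (simp add: ac_simps)
    moreover have "unit_in UNIV (residue b)"
      using k(2) by (auto simp: unit_in_def)
    ultimately show ?thesis
      using that(1) k(1,3) subring_D by (metis mem_R_iff subring_one)
  qed
  consider "b \<notin> M" | "c \<notin> M" | "b \<in> M" "c \<in> M"
    by blast
  then show ?thesis
  proof cases
    case 1
    then show ?thesis
      using normalize_left x x_eq by blast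
  next
    case 2
    then show ?thesis
      using normalize_left[of c b] x x_eq by (metis mult.commute)
  next
    case 3
    then show ?thesis
      using M_subset_R x_eq by (intro exI[of _ 1]) (auto simp: unit_in_one[OF subring_of_UNIV])
  qed
qed

lemma atom_in_R_imp_unit_or_atom:
  assumes x: "atom_in R x"
  shows "unit_in UNIV x \<or> atom_in UNIV x"
proof -
  have "unit_in UNIV b \<or> unit_in UNIV c" if x_eq: "x = b * c" for b c
  proof -
    have "x \<in> R"
      using x by (simp add: atom_in_def)
    then obtain u v where uv: "unit_in UNIV u" "unit_in UNIV v" "b * u \<in> R" "c * v \<in> R"
      "x = (b * u) * (c * v)"
      using factor_in_R_up_to_units x_eq by blast
    then have "unit_in R (b * u) \<or> unit_in R (c * v)"
      using x by (auto simp: atom_in_def)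
    then show ?thesis
      using unit_in_imp_unit_in_UNIV unit_in_UNIV_mult_iff by metis
  qed
  then show ?thesis
    using x by (auto simp: atom_in_def)
qed

lemma atom_in_R_if_residue_one:
  assumes y: "atom_in UNIV y" and y1: "residue y = 1"
  shows "atom_in R y"
proof -
  have "unit_in R b \<or> unit_in R c" if "b \<in> R" "c \<in> R" "y = b * c" for b c
  proof -
    have "residue b * residue c = 1" "residue c * residue b = 1"
      using that(3) y1 by (simp_all add: residue_mult mult.commute)
    then have "unit_in D (residue b)" "unit_in D (residue c)"
      using that(1,2) unfolding mem_R_iff unit_in_def by blast+
    moreover have "unit_in UNIV b \<or> unit_in UNIV c"
      using y that(3) by (auto simp: atom_in_def)
    ultimately show ?thesis
      using that(1,2) by (auto simp: unit_in_R_iff)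
  qed
  moreover have "y \<in> R"
    using y1 subring_D by (simp add: mem_R_iff subring_one)
  ultimately show ?thesis
    using y unit_in_imp_unit_in_UNIV by (auto simp: atom_in_def)
qed

lemma factorizable_in_UNIV_imp_residue_mult:
  assumes "factorizable_in UNIV t" "t \<notin> M"
  shows "\<exists>n. factorizable_in R n \<and> t = residue t * n"
  using assms
proof (induction rule: factorizable_in_induct)
  case (unit u)
  obtain k where k: "unit_in UNIV k" "residue u * k = 1" "residue (u * k) = 1"
    using residue_inverseE[OF unit.prems] by blast
  have "unit_in UNIV (u * k)"
    using unit.hyps k(1) unit_in_UNIV_mult_iff by blast
  then have "factorizable_in R (u * k)"
    using k(3)
    by (simp add: unit_in_R_if_residue_one factorizable_in_unit)
  moreover have "u = residue u * (u * k)"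
    using k(2) by (simp add: ac_simps)
  ultimately show ?case
    by blast
next
  case (atom a q)
  have aM: "a \<notin> M" and qM: "q \<notin> M"
    using atom.prems mult_not_in_M_iff by auto
  obtain n where n: "factorizable_in R n" "q = residue q * n"
    using atom.IH qM by blast
  obtain k where k: "unit_in UNIV k" "residue a * k = 1" "residue (k * a) = 1"
    using residue_inverseE[OF aM] by (metis mult.commute)
  have "atom_in UNIV (k * a)"
    using atom_in_unit_mult[OF subring_of_UNIV atom.hyps(1) k(1)] .
  then have "factorizable_in R (k * a)"
    using k(3)
    using factorizable_in_atom[OF subring_R] atom_in_R_if_residue_one by blast
  then have "factorizable_in R ((k * a) * n)"
    using factorizable_in_mult[OF subring_R] n(1) by blast
  moreover have "a * q = residue (a * q) * ((k * a) * n)"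
    using n(2) k(2) by (simp add: residue_mult ac_simps)
  ultimately show ?case
    by blast
qed

lemma atom_in_D_imp_atom_in_R:
  assumes d: "atom_in D d"
  shows "atom_in R d"
proof -
  have dD: "d \<in> D" and "d \<noteq> 0" and "\<not> unit_in D d"
    using d by (auto simp: atom_in_def)
  have "unit_in R b \<or> unit_in R c" if "b \<in> R" "c \<in> R" "d = b * c" for b c
  proof -
    have "residue b * residue c = d"
      using that(3) dD D_subset_K by (auto simp: residue_mult[symmetric] residue_of_K)
    then have "unit_in D (residue b) \<or> unit_in D (residue c)"
      using d that(1,2) by (auto simp: atom_in_def mem_R_iff)
    moreover have "unit_in UNIV b" "unit_in UNIV c"
      using K_nonzero_unit[of d] dD D_subset_K \<open>d \<noteq> 0\<close> that(3) unit_in_UNIV_mult_iff by auto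
    ultimately show ?thesis
      using that(1,2) by (auto simp: unit_in_R_iff)
  qed
  then show ?thesis
    using dD D_subset_R \<open>d \<noteq> 0\<close> \<open>\<not> unit_in D d\<close> unit_in_R_iff_unit_in_D
    by (auto simp: atom_in_def)
qed

lemma factorizable_in_R_if_in_D:
  assumes "atomic_dom D" "d \<in> D" "d \<noteq> 0"
  shows "factorizable_in R d"
proof (cases "unit_in D d")
  case True
  then show ?thesis
    using assms(2) unit_in_R_iff_unit_in_D factorizable_in_unit by blast
next
  case False
  then obtain xs where "\<forall>x\<in>set xs. atom_in D x" "d = prod_list xs"
    using assms unfolding atomic_dom_def atomic_elem_in_def by blast
  then show ?thesis
    unfolding factorizable_in_def using atom_in_D_imp_atom_in_R unit_in_one[OF subring_R]
    by (intro exI[of _ 1] exI[of _ xs]) simp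
qed

lemma exists_unit_mult_in_R: "\<exists>u. unit_in UNIV u \<and> t * u \<in> R"
proof (cases "t \<in> M")
  case True
  then show ?thesis
    using M_subset_R unit_in_one[OF subring_of_UNIV] by (intro exI[of _ 1]) auto
next
  case False
  then obtain k where "unit_in UNIV k" "residue (t * k) = 1"
    using residue_inverseE by blast
  then show ?thesis
    using subring_D by (auto simp: mem_R_iff subring_one)
qed

lemma unit_in_R_iff_unit_in_UNIV:
  assumes "subfield_of D" "x \<in> R"
  shows "unit_in R x \<longleftrightarrow> unit_in UNIV x"
proof
  assume u: "unit_in UNIV x"
  then have "residue x \<noteq> 0"
    using unit_not_in_M residue_eq_0_iff by blast
  then have "unit_in D (residue x)"
    using assms by (auto simp: subfield_of_def mem_R_iff unit_in_def)
  then show "unit_in R x"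
    using assms(2) u by (simp add: unit_in_R_iff)
qed (rule unit_in_imp_unit_in_UNIV)

lemma atom_in_R_iff_atom_in_UNIV:
  assumes D: "subfield_of D" and x: "x \<in> R"
  shows "atom_in R x \<longleftrightarrow> atom_in UNIV x"
proof
  assume "atom_in R x"
  then show "atom_in UNIV x"
    using atom_in_R_imp_unit_or_atom unit_in_R_iff_unit_in_UNIV[OF D x]
    by (auto simp: atom_in_def)
next
  assume "atom_in UNIV x"
  then show "atom_in R x"
    using x unit_in_R_iff_unit_in_UNIV[OF D] unit_in_imp_unit_in_UNIV
    by (auto simp: atom_in_def)
qed

lemma factorizable_in_R_if_UNIV:
  assumes D: "subfield_of D" and "factorizable_in UNIV x"
  shows "unit_in UNIV v \<Longrightarrow> x * v \<in> R \<Longrightarrow> factorizable_in R (x * v)"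
  \<comment> \<open>The unit cofactor \<open>v\<close> absorbs the rescaling performed at each step.\<close>
  using assms(2)
proof (induction arbitrary: v rule: factorizable_in_induct)
  case (unit u)
  then show ?case
    using unit_in_mult[OF subring_of_UNIV] unit_in_R_iff_unit_in_UNIV[OF D]
      factorizable_in_unit by blast
next
  case (atom a q)
  obtain u w where uw: "unit_in UNIV u" "unit_in UNIV w" "a * u \<in> R" "q * v * w \<in> R"
    "a * q * v = (a * u) * (q * v * w)"
    using factor_in_R_up_to_units[OF atom.prems(2), of a "q * v"] by (auto simp: mult.assoc)
  have "atom_in R (a * u)"
    using atom_in_unit_mult[OF subring_of_UNIV atom.hyps(1) uw(1)] uw(3)
      atom_in_R_iff_atom_in_UNIV[OF D] by (simp add: mult.commute)
  moreover have "factorizable_in R (q * (v * w))"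
    using atom.IH unit_in_mult[OF subring_of_UNIV atom.prems(1) uw(2)] uw(4)
    by (simp add: mult.assoc)
  ultimately show ?case
    using uw(5) factorizable_in_mult[OF subring_R] factorizable_in_atom[OF subring_R]
    by (metis mult.assoc)
qed

lemma factorizable_in_R_iff_UNIV:
  assumes D: "subfield_of D" and x: "x \<in> R"
  shows "factorizable_in R x \<longleftrightarrow> factorizable_in UNIV x"
proof
  assume "factorizable_in R x"
  then show "factorizable_in UNIV x"
  proof (induction rule: factorizable_in_induct)
    case (unit u)
    then show ?case
      by (simp add: unit_in_imp_unit_in_UNIV factorizable_in_unit)
  next
    case (atom a q)
    then have "atom_in UNIV a"
      using atom_in_R_iff_atom_in_UNIV[OF D] by (auto simp: atom_in_def)
    then show ?case
      using factorizable_in_mult[OF subring_of_UNIV] factorizable_in_atom[OF subring_of_UNIV]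
        atom.IH by blast
  qed
next
  assume "factorizable_in UNIV x"
  then show "factorizable_in R x"
    using factorizable_in_R_if_UNIV[OF D _ unit_in_one[OF subring_of_UNIV]] x by simp
qed

lemma completely_atomic_UNIV_if_R:
  assumes D: "subfield_of D" and caR: "completely_atomic R"
  shows "completely_atomic (UNIV :: 'a set)"
  unfolding completely_atomic_iff[OF subring_of_UNIV]
proof (intro allI impI; elim conjE)
  fix p b :: 'a
  assume p: "factorizable_in UNIV p" and "dvd_in UNIV b p"
  then obtain c where c: "p = b * c"
    by (auto simp: dvd_in_def)
  obtain u v where u: "unit_in UNIV u" "b * u \<in> R" and v: "unit_in UNIV v" "c * v \<in> R"
    using exists_unit_mult_in_R by meson
  have eq: "p * (u * v) = (b * u) * (c * v)"
    using c by (simp add: ac_simps)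
  have "factorizable_in UNIV (p * (u * v))"
    using factorizable_in_mult[OF subring_of_UNIV p] factorizable_in_unit
      unit_in_mult[OF subring_of_UNIV u(1) v(1)] by blast
  then have "factorizable_in R (p * (u * v))"
    unfolding eq using factorizable_in_R_iff_UNIV[OF D] subring_closed(3)[OF subring_R u(2) v(2)]
    by blast
  moreover have "dvd_in R (b * u) (p * (u * v))"
    unfolding eq using u(2) v(2) by (auto simp: dvd_in_def)
  ultimately have "factorizable_in UNIV (b * u)"
    using caR factorizable_in_R_iff_UNIV[OF D u(2)]
    unfolding completely_atomic_iff[OF subring_R] by blast
  moreover obtain u' where "u * u' = 1" "unit_in UNIV u'"
    using u(1) by (auto simp: unit_in_def mult.commute)
  ultimately show "factorizable_in UNIV b"
    using factorizable_in_mult[OF subring_of_UNIV _ factorizable_in_unit, of "b * u" u']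
    by (simp add: mult.assoc)
qed

lemma completely_atomic_R_if_UNIV:
  assumes D: "subfield_of D" and caT: "completely_atomic (UNIV :: 'a set)"
  shows "completely_atomic R"
  unfolding completely_atomic_iff[OF subring_R]
proof (intro allI impI; elim conjE)
  fix p b
  assume p: "factorizable_in R p" and b: "dvd_in R b p"
  have "p \<in> R" "b \<in> R"
    using factorizable_in_mem[OF subring_R p] b by (auto simp: dvd_in_def)
  moreover have "dvd_in UNIV b p"
    using b by (auto simp: dvd_in_def)
  moreover have "factorizable_in UNIV p"
    using p factorizable_in_R_iff_UNIV[OF D \<open>p \<in> R\<close>] by blast
  ultimately have "factorizable_in UNIV b"
    using caT unfolding completely_atomic_iff[OF subring_of_UNIV] by blast
  then show "factorizable_in R b"
    using factorizable_in_R_iff_UNIV[OF D \<open>b \<in> R\<close>] by blast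
qed

lemma atom_in_R_not_in_M:
  assumes D: "\<not> subfield_of D" and x: "atom_in R x"
  shows "x \<notin> M"
proof
  assume xM: "x \<in> M"
  obtain d where d: "d \<in> D" "d \<noteq> 0" "\<not> unit_in D d"
    using D subring_D by (auto simp: subfield_of_def unit_in_def)
  obtain k where k: "k \<in> K" "d * k = 1"
    using K_inverse d(1,2) D_subset_K by blast
  have kx: "k * x \<in> M"
    using ideal_mult_left[OF ideal_M xM] .
  have "x = d * (k * x)"
    using k(2) by (simp add: mult.assoc[symmetric])
  then have "unit_in R d \<or> unit_in R (k * x)"
    using x d(1) kx D_subset_R M_subset_R unfolding atom_in_def by blast
  moreover have "\<not> unit_in R (k * x)"
    using kx unit_not_in_M unit_in_imp_unit_in_UNIV by blast
  ultimately show False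
    using d(1,3) unit_in_R_iff_unit_in_D by blast
qed

lemma factorizable_in_R_imp_UNIV_not_in_M:
  assumes D: "\<not> subfield_of D" and "factorizable_in R p"
  shows "factorizable_in UNIV p \<and> p \<notin> M"
  using assms(2)
proof (induction rule: factorizable_in_induct)
  case (unit u)
  then show ?case
    using unit_in_imp_unit_in_UNIV unit_not_in_M factorizable_in_unit by blast
next
  case (atom a q)
  then have "factorizable_in UNIV a"
    using atom_in_R_imp_unit_or_atom factorizable_in_unit factorizable_in_atom[OF subring_of_UNIV]
    by blast
  then show ?case
    using atom atom_in_R_not_in_M[OF D] factorizable_in_mult[OF subring_of_UNIV] mult_not_in_M_iff
    by blast
qed

lemma completely_atomic_R:
  assumes D: "\<not> subfield_of D" "atomic_dom D" and T: "completely_atomic (UNIV :: 'a set)"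
  shows "completely_atomic R"
  unfolding completely_atomic_iff[OF subring_R]
proof (intro allI impI; elim conjE)
  fix p b
  assume p: "factorizable_in R p" and "dvd_in R b p"
  then obtain c where bc: "b \<in> R" "c \<in> R" "p = b * c"
    by (auto simp: dvd_in_def)
  have pT: "factorizable_in UNIV p" and "p \<notin> M"
    using factorizable_in_R_imp_UNIV_not_in_M[OF D(1) p] by auto
  then have bM: "b \<notin> M"
    using bc(3) mult_not_in_M_iff by blast
  have "factorizable_in UNIV b"
    using T pT bc(3) unfolding completely_atomic_iff[OF subring_of_UNIV] by (auto simp: dvd_in_def)
  then obtain n where n: "factorizable_in R n" "b = residue b * n"
    using factorizable_in_UNIV_imp_residue_mult bM by blast
  have "factorizable_in R (residue b)"
    using factorizable_in_R_if_in_D[OF D(2)] bc(1) bM by (simp add: mem_R_iff residue_eq_0_iff)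
  then show "factorizable_in R b"
    using factorizable_in_mult[OF subring_R _ n(1)] n(2) by metis
qed

end

theorem theorem3p1:
  fixes K D M :: "'a::idom set"
  assumes K: "subfield_of K"
    and M: "maximal_ideal M" and Mnz: "M \<noteq> {0}"
    and TKM: "\<forall>t::'a. \<exists>k\<in>K. \<exists>m\<in>M. t = k + m"
    and D: "subring_of D" and DK: "D \<subseteq> K"
  defines "R \<equiv> {d + m | d m. d \<in> D \<and> m \<in> M}"
  shows "(subfield_of D \<longrightarrow> (completely_atomic R \<longleftrightarrow> completely_atomic (UNIV::'a set)))
     \<and> (\<not> subfield_of D \<and> atomic_dom D \<and> completely_atomic (UNIV::'a set)
          \<longrightarrow> completely_atomic R)"
proof -
  \<comment> \<open>Maximality of \<open>M\<close> enters only through properness.\<close>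
  interpret dm: D_plus_M K M D
    using K M TKM D DK by unfold_locales (auto simp: maximal_ideal_def)
  have "R = dm.R"
    unfolding R_def dm.R_def ..
  then show ?thesis
    using dm.completely_atomic_UNIV_if_R dm.completely_atomic_R_if_UNIV dm.completely_atomic_R
    by blast
qed

end
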